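(* Let $n\ge 2$ and let $g_1,g_2\in\hat S_n$ be glides with offsets $k_1$ and $k_2$ respectively. Then $$g_2g_1=\rho^{k_2}(g_1)\,\rho^{-k_1}(g_2).$$
   Context: The affine symmetric group $\hat S_n$ is generated by $s_0,s_1,\dots,s_{n-1}$ (indices taken modulo $n$) subject to $s_i^2=1$, $s_is_js_i=s_js_is_j$ if $i-j\equiv\pm1\pmod n$, and $s_is_j=s_js_i$ if $i-j\not\equiv 0,\pm1\pmod n$. Let $\rho:\hat S_n\to\hat S_n$ be the automorphism with $\rho(s_i)=s_{i+1}$ for all $i$. Let $\phi:\hat S_n\to S_n$ be the homomorphism with $\phi(s_i)=(i\ \ i+1)$ for $1\le i\le n-1$ and $\phi(s_0)=(1\ \ n)$. An element $g\in\hat S_n$ is a glide if for some $k\in\{0,1,\dots,n-1\}$ the permutation $\phi(g)$ sends $j\mapsto j+k$ for $1\le j\le n-k$ and $j\mapsto j+k-n$ for $n-k<j\le n$; this $k$ is the offset of $g$. *)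

theory Defs
  imports "HOL-Combinatorics.Transposition"
begin

text \<open>Elements of the affine symmetric group are represented by words over the
generator indices 0..n-1; the word [i1,...,im] stands for s_i1 s_i2 ... s_im.
Two words represent the same group element iff they are related by the
congruence generated by the defining relations of the presentation.\<close>

definition adj_mod :: "nat \<Rightarrow> nat \<Rightarrow> nat \<Rightarrow> bool" where
  "adj_mod n i j \<longleftrightarrow> (int i - int j) mod int n = 1 \<or> (int i - int j) mod int n = (int n - 1) mod int n"

inductive aff_rel :: "nat \<Rightarrow> nat list \<Rightarrow> nat list \<Rightarrow> bool" for n where
  inv: "i < n \<Longrightarrow> aff_rel n [i, i] []"
| braid: "i < n \<Longrightarrow> j < n \<Longrightarrow> adj_mod n i j \<Longrightarrow> aff_rel n [i, j, i] [j, i, j]"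
| comm: "i < n \<Longrightarrow> j < n \<Longrightarrow> (int i - int j) mod int n \<noteq> 0 \<Longrightarrow> \<not> adj_mod n i j
          \<Longrightarrow> aff_rel n [i, j] [j, i]"

inductive aff_eq :: "nat \<Rightarrow> nat list \<Rightarrow> nat list \<Rightarrow> bool" for n where
  refl: "aff_eq n w w"
| sym: "aff_eq n u w \<Longrightarrow> aff_eq n w u"
| trans: "aff_eq n u v \<Longrightarrow> aff_eq n v w \<Longrightarrow> aff_eq n u w"
| ctx: "aff_rel n l r \<Longrightarrow> aff_eq n (u @ l @ v) (u @ r @ v)"

definition aff_word :: "nat \<Rightarrow> nat list \<Rightarrow> bool" where
  "aff_word n w \<longleftrightarrow> set w \<subseteq> {..<n}"

definition rho_pow :: "nat \<Rightarrow> int \<Rightarrow> nat list \<Rightarrow> nat list" where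
  "rho_pow n k w = map (\<lambda>i. nat ((int i + k) mod int n)) w"

definition phi_gen :: "nat \<Rightarrow> nat \<Rightarrow> nat \<Rightarrow> nat" where
  "phi_gen n i = (if i = 0 then transpose 1 n else transpose i (i + 1))"

definition phi :: "nat \<Rightarrow> nat list \<Rightarrow> nat \<Rightarrow> nat" where
  "phi n w = foldr (\<lambda>i f. phi_gen n i \<circ> f) w id"

definition glide_offset :: "nat \<Rightarrow> nat list \<Rightarrow> nat \<Rightarrow> bool" where
  "glide_offset n w k \<longleftrightarrow> k < n \<and>
     (\<forall>j. 1 \<le> j \<and> j \<le> n - k \<longrightarrow> phi n w j = j + k) \<and>
     (\<forall>j. n - k < j \<and> j \<le> n \<longrightarrow> phi n w j = j + k - n)"

end

theory Submission
  imports Defs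
begin

text \<open>Adjoin to the affine symmetric group the rotation \<open>\<tau>\<close> with \<open>\<tau> s\<^sub>i \<tau>^-1 = s\<^sub>i\<^sub>+\<^sub>1\<close>, so
  that conjugation by \<open>\<tau>^k\<close> is \<open>\<rho>^k\<close>.  For a glide \<open>g\<close> with offset \<open>k\<close>, \<open>\<phi> g\<close> is the \<open>k\<close>-th power
  of the cyclic rotation of \<open>{1..n}\<close>, so \<open>\<tau>^-k g\<close> lies in the kernel of the projection of the
  extended group onto the symmetric group.  Every element of the extended group can be written as
  \<open>\<tau>^-nq t\<^sub>j\<^sub>1 \<cdots> t\<^sub>j\<^sub>r w\<close> with \<open>\<tau>^n\<close> central, \<open>t\<^sub>j\<close> pairwise commuting translations, and \<open>w\<close> a
  word in \<open>s\<^sub>1, \<dots>, s\<^sub>n\<^sub>-\<^sub>1\<close>; such words are determined by their image in the symmetric group, so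
  \<open>w\<close> is trivial for elements of the kernel.  Hence \<open>\<tau>^-k\<^sub>1 g\<^sub>1\<close> and \<open>\<tau>^-k\<^sub>2 g\<^sub>2\<close> commute, and
  moving the powers of \<open>\<tau>\<close> to the left turns this into the claimed identity.\<close>

lemma mod_eq_if_small:
  fixes d m :: int
  assumes "- m < d" "d < m"
  shows "d mod m = (if 0 \<le> d then d else d + m)"
proof (cases "0 \<le> d")
  case False
  have "d mod m = (d + m) mod m" by simp
  also have "\<dots> = d + m" using False assms by (intro mod_pos_pos_trivial) auto
  finally show ?thesis using False by simp
qed (use assms in simp)

lemma transpose_conj:
  fixes f g :: "'a \<Rightarrow> 'a"
  assumes "f \<circ> g = id" "g \<circ> f = id"
  shows "f \<circ> transpose a b \<circ> g = transpose (f a) (f b)"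
proof -
  have fg: "f (g y) = y" and "g (f y) = y" for y
    using assms by (metis comp_apply id_apply)+
  then have "g y = z \<longleftrightarrow> y = f z" for y z by metis
  then show ?thesis using fg by (auto simp: fun_eq_iff transpose_def)
qed

lemma transpose_braid:
  assumes "a \<noteq> b" "b \<noteq> c"
  shows "transpose a b \<circ> (transpose b c \<circ> transpose a b) = transpose b c \<circ> (transpose a b \<circ> transpose b c)"
  using assms by (auto simp: fun_eq_iff transpose_def)

lemma atLeastLessThan_subset_lessThan [simp]: "m \<le> k \<Longrightarrow> {j..<m} \<subseteq> {..<k::nat}"
  by auto

declare aff_eq.trans [trans]

lemma aff_eq_rel: "aff_rel n l r \<Longrightarrow> aff_eq n l r"
  using aff_eq.ctx[of n l r "[]" "[]"] by simp

lemma aff_eq_append_right: "aff_eq n u u' \<Longrightarrow> aff_eq n (u @ v) (u' @ v)"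
proof (induction rule: aff_eq.induct)
  case (ctx l r a b)
  then show ?case using aff_eq.ctx[of n l r a "b @ v"] by simp
next
  case sym
  then show ?case by (blast intro: aff_eq.sym)
next
  case trans
  then show ?case by (blast intro: aff_eq.trans)
qed (rule aff_eq.refl)

lemma aff_eq_append_left: "aff_eq n v v' \<Longrightarrow> aff_eq n (w @ v) (w @ v')"
proof (induction rule: aff_eq.induct)
  case (ctx l r a b)
  then show ?case using aff_eq.ctx[of n l r "w @ a" b] by simp
next
  case sym
  then show ?case by (blast intro: aff_eq.sym)
next
  case trans
  then show ?case by (blast intro: aff_eq.trans)
qed (rule aff_eq.refl)

lemma aff_eq_append: "aff_eq n u u' \<Longrightarrow> aff_eq n v v' \<Longrightarrow> aff_eq n (u @ v) (u' @ v')"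
  by (metis aff_eq.trans aff_eq_append_left aff_eq_append_right)

lemma aff_eq_rev: "aff_eq n u v \<Longrightarrow> aff_eq n (rev u) (rev v)"
proof (induction rule: aff_eq.induct)
  case (ctx l r a b)
  from ctx have "aff_eq n (rev l) (rev r)"
    by cases (simp_all add: aff_eq_rel aff_rel.intros aff_eq.sym)
  then show ?case using aff_eq_append_left[OF aff_eq_append_right] by simp
next
  case sym
  then show ?case by (blast intro: aff_eq.sym)
next
  case trans
  then show ?case by (blast intro: aff_eq.trans)
qed (rule aff_eq.refl)

lemma aff_eq_append_rev_Nil: "set w \<subseteq> {..<n} \<Longrightarrow> aff_eq n (w @ rev w) []"
proof (induction w)
  case (Cons i w)
  then have "aff_eq n ([i] @ (w @ rev w) @ [i]) ([i] @ [] @ [i])"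
    by (intro aff_eq_append_left aff_eq_append_right) auto
  also have "aff_eq n ([i] @ [] @ [i]) []"
    using Cons.prems by (auto intro: aff_eq_rel aff_rel.inv)
  finally show ?case by simp
qed (simp add: aff_eq.refl)

section \<open>Descending words and the projection to the symmetric group\<close>

lemma phi_Nil [simp]: "phi n [] = id"
  by (simp add: phi_def)

lemma phi_Cons [simp]: "phi n (i # w) = phi_gen n i \<circ> phi n w"
  by (simp add: phi_def)

lemma phi_append [simp]: "phi n (u @ v) = phi n u \<circ> phi n v"
  by (induction u) (auto simp: comp_assoc)

lemma phi_gen_eq_transpose: "phi_gen n i = transpose (if i = 0 then n else i) (i + 1)"
  by (simp add: phi_gen_def transpose_commute)

lemma phi_fix_outside: "set w \<subseteq> {..<n} \<Longrightarrow> x = 0 \<or> n < x \<Longrightarrow> phi n w x = x"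
  by (induction w) (auto simp: phi_gen_def)

lemma phi_in_range: "set w \<subseteq> {..<n} \<Longrightarrow> 1 \<le> x \<Longrightarrow> x \<le> n \<Longrightarrow> 1 \<le> phi n w x \<and> phi n w x \<le> n"
  by (induction w) (auto simp: phi_gen_def transpose_def)

lemma phi_fix_above: "set w \<subseteq> {1..<m} \<Longrightarrow> m < x \<Longrightarrow> phi n w x = x"
  by (induction w) (auto simp: phi_gen_def)

definition desc :: "nat \<Rightarrow> nat \<Rightarrow> nat list" where
  "desc m j = rev [j..<m]"

lemma set_desc [simp]: "set (desc m j) = {j..<m}"
  by (simp add: desc_def)

lemma map_pred_desc: "map (\<lambda>i. i - 1) (desc (Suc m) (Suc j)) = desc m j"
  unfolding desc_def map_Suc_upt[symmetric] rev_map by (simp add: comp_def)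

lemma phi_desc_apply: "1 \<le> j \<Longrightarrow> j \<le> m \<Longrightarrow> phi n (desc m j) j = m"
proof (induction m)
  case (Suc m)
  show ?case
  proof (cases "j = Suc m")
    case False
    then have "j \<le> m" "desc (Suc m) j = m # desc m j" using Suc.prems by (simp_all add: desc_def)
    then show ?thesis using Suc by (simp add: phi_gen_def)
  qed (simp add: desc_def)
qed simp

lemma phi_desc_one:
  "1 \<le> m \<Longrightarrow> phi n (desc m 1) x = (if x = 1 then m else if 2 \<le> x \<and> x \<le> m then x - 1 else x)"
proof (induction m)
  case (Suc m)
  show ?case
  proof (cases "m = 0")
    case False
    then have "phi n (desc (Suc m) 1) x = transpose m (Suc m) (phi n (desc m 1) x)"
      by (simp add: desc_def phi_gen_def)
    then show ?thesis using Suc False by (auto simp: transpose_def)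
  qed (simp add: desc_def)
qed simp

context
  fixes n :: nat
  assumes n2: "2 \<le> n"
begin

abbreviation word_eq :: "nat list \<Rightarrow> nat list \<Rightarrow> bool" (infix "\<sim>" 50) where
  "u \<sim> v \<equiv> aff_eq n u v"

lemma adj_mod_iff:
  assumes "i < n" "j < n"
  shows "adj_mod n i j \<longleftrightarrow> i = j + 1 \<or> j = i + 1 \<or> (i = 0 \<and> j = n - 1) \<or> (j = 0 \<and> i = n - 1)"
proof -
  have "(int i - int j) mod int n = (if j \<le> i then int i - int j else int i - int j + int n)"
    using assms by (simp add: mod_eq_if_small)
  moreover have "(int n - 1) mod int n = int n - 1" using n2 by (simp add: mod_eq_if_small)
  ultimately show ?thesis unfolding adj_mod_def using assms n2 by (cases "j \<le> i") auto
qed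

lemma aff_eq_commute_far:
  assumes "1 \<le> a" "a < n" "1 \<le> b" "b < n" "a + 2 \<le> b \<or> b + 2 \<le> a"
  shows "[a, b] \<sim> [b, a]"
proof -
  have "(int a - int b) mod int n \<noteq> 0"
    using assms by (auto simp add: mod_eq_if_small)
  moreover have "\<not> adj_mod n a b" using assms by (auto simp add: adj_mod_iff)
  ultimately show ?thesis using assms by (intro aff_eq_rel aff_rel.comm) auto
qed

lemma aff_eq_commute_far_word:
  assumes "1 \<le> a" "a < n" "\<forall>b\<in>set w. 1 \<le> b \<and> b < n \<and> (a + 2 \<le> b \<or> b + 2 \<le> a)"
  shows "[a] @ w \<sim> w @ [a]"
  using assms(3)
proof (induction w)
  case (Cons b w)
  have "[a] @ b # w = [a, b] @ w" by simp
  also have "[a, b] @ w \<sim> [b, a] @ w"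
    using Cons.prems assms by (intro aff_eq_append_right aff_eq_commute_far) auto
  also have "[b, a] @ w = [b] @ [a] @ w" by simp
  also have "\<dots> \<sim> [b] @ w @ [a]"
    using Cons by (intro aff_eq_append_left) auto
  finally show ?case by simp
qed (simp add: aff_eq.refl)

lemma aff_eq_cancel_pair:
  assumes "a < n"
  shows "p @ [a, a] @ q \<sim> p @ q"
proof -
  have "[a, a] \<sim> []" using assms by (intro aff_eq_rel aff_rel.inv)
  then show ?thesis using aff_eq_append_left[OF aff_eq_append_right, of n "[a, a]" "[]" p q] by simp
qed

lemma desc_append_letter:
  assumes "1 \<le> j" "j < i" "i < m" "m \<le> n"
  shows "desc m j @ [i] \<sim> [i - 1] @ desc m j"
proof -
  define A where "A = rev [i + 1..<m]"
  define B where "B = rev [j..<i - 1]"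
  have "[j..<m] = [j..<i - 1] @ [i - 1, i] @ [i + 1..<m]"
    using assms upt_add_eq_append[of j "i - 1" "m - (i - 1)"]
    by (simp add: upt_conv_Cons Suc_diff_Suc)
  then have D: "desc m j = A @ [i, i - 1] @ B" unfolding desc_def A_def B_def by simp
  have "adj_mod n i (i - 1)" using assms by (simp add: adj_mod_iff)
  then have braid: "[i, i - 1, i] \<sim> [i - 1, i, i - 1]"
    using assms by (intro aff_eq_rel aff_rel.braid) auto
  have "desc m j @ [i] = (A @ [i, i - 1]) @ (B @ [i])" using D by simp
  also have "\<dots> \<sim> (A @ [i, i - 1]) @ ([i] @ B)"
    using assms by (intro aff_eq_append_left aff_eq.sym[OF aff_eq_commute_far_word])
      (auto simp: B_def)
  also have "\<dots> = A @ [i, i - 1, i] @ B" by simp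
  also have "\<dots> \<sim> A @ [i - 1, i, i - 1] @ B"
    by (intro aff_eq_append aff_eq.refl braid)
  also have "\<dots> = (A @ [i - 1]) @ [i, i - 1] @ B" by simp
  also have "\<dots> \<sim> ([i - 1] @ A) @ [i, i - 1] @ B"
    using assms by (intro aff_eq_append_right aff_eq.sym[OF aff_eq_commute_far_word])
      (auto simp: A_def)
  also have "\<dots> = [i - 1] @ desc m j" using D by simp
  finally show ?thesis .
qed

lemma phi_gen_braid:
  assumes "j < n" "j = i + 1 \<or> (i = 0 \<and> j = n - 1)"
  shows "phi n [i, j, i] = phi n [j, i, j]"
proof -
  consider "i = 0" "j = 1" | "i \<noteq> 0" "j = i + 1" | "i = 0" "j = n - 1" using assms by fastforce
  then show ?thesis
  proof cases
    case 1
    then show ?thesis using n2 transpose_braid[of n 1 2] by (simp add: phi_gen_eq_transpose numeral_2_eq_2)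
  next
    case 2
    then show ?thesis using transpose_braid[of i "i + 1" "i + 2"] by (simp add: phi_gen_eq_transpose)
  next
    case 3
    then show ?thesis using n2 transpose_braid[of "n - 1" n 1]
      by (simp add: phi_gen_eq_transpose transpose_commute[of 1 n])
  qed
qed

lemma phi_gen_commute:
  assumes "i < n" "j < n" "(int i - int j) mod int n \<noteq> 0" "\<not> adj_mod n i j"
  shows "phi n [i, j] = phi n [j, i]"
proof -
  have "i \<noteq> j" "\<not> (i = j + 1 \<or> j = i + 1 \<or> (i = 0 \<and> j = n - 1) \<or> (j = 0 \<and> i = n - 1))"
    using assms by (auto simp: adj_mod_iff)
  then show ?thesis using assms(1,2)
    by (auto simp: phi_gen_eq_transpose fun_eq_iff transpose_def)
qed

lemma phi_aff_eq: "u \<sim> v \<Longrightarrow> phi n u = phi n v"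
proof (induction rule: aff_eq.induct)
  case (ctx l r a b)
  from ctx have "phi n l = phi n r"
  proof cases
    case (braid i j)
    then show ?thesis using phi_gen_braid[of j i] phi_gen_braid[of i j] by (auto simp: adj_mod_iff)
  next
    case (comm i j)
    then show ?thesis using phi_gen_commute[OF comm(3-6)] by simp
  qed (simp add: phi_gen_def)
  then show ?case by simp
qed simp_all

section \<open>Words in \<open>s\<^sub>1, \<dots>, s\<^sub>n\<^sub>-\<^sub>1\<close> are determined by their projection\<close>

lemma desc_append_letter_factor:
  assumes "1 \<le> j" "j \<le> m" "m \<le> n" "1 \<le> i" "i < m"
  obtains u j' where "set u \<subseteq> {1..<m - 1}" "1 \<le> j'" "j' \<le> m" "desc m j @ [i] \<sim> u @ desc m j'"
proof -
  consider "i + 1 = j" | "i = j" | "i + 2 \<le> j" | "j < i" by linarith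
  then show ?thesis
  proof cases
    case 1
    then have "desc m j @ [i] = [] @ desc m i" using assms by (simp add: desc_def upt_conv_Cons)
    then show ?thesis using that[of "[]" i] assms by (simp add: aff_eq.refl)
  next
    case 2
    then have "desc m j @ [i] = desc m (j + 1) @ [j, j] @ []"
      using assms by (simp add: desc_def upt_conv_Cons)
    also have "\<dots> \<sim> [] @ desc m (j + 1) @ []"
      using assms 2 aff_eq_cancel_pair[of j "desc m (j + 1)" "[]"] by simp
    finally show ?thesis using that[of "[]" "j + 1"] assms 2 by simp
  next
    case 3
    then have "desc m j @ [i] \<sim> [i] @ desc m j"
      using assms by (intro aff_eq.sym[OF aff_eq_commute_far_word]) auto
    then show ?thesis using that[of "[i]" j] assms 3 by simp
  next
    case 4
    then have "desc m j @ [i] \<sim> [i - 1] @ desc m j"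
      using assms by (intro desc_append_letter) auto
    then show ?thesis using that[of "[i - 1]" j] assms 4 by force
  qed
qed

lemma desc_factorisation:
  assumes "1 \<le> m" "m \<le> n" "set v \<subseteq> {1..<m}"
  obtains u j where "set u \<subseteq> {1..<m - 1}" "1 \<le> j" "j \<le> m" "v \<sim> u @ desc m j"
proof -
  have "\<exists>u j. set u \<subseteq> {1..<m - 1} \<and> 1 \<le> j \<and> j \<le> m \<and> v \<sim> u @ desc m j"
    using assms(3)
  proof (induction v rule: rev_induct)
    case Nil
    show ?case using assms by (intro exI[of _ "[]"] exI[of _ m]) (auto simp: desc_def aff_eq.refl)
  next
    case (snoc i v)
    then obtain u j where u: "set u \<subseteq> {1..<m - 1}" "1 \<le> j" "j \<le> m" "v \<sim> u @ desc m j"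
      by auto
    obtain u' j' where u': "set u' \<subseteq> {1..<m - 1}" "1 \<le> j'" "j' \<le> m"
      "desc m j @ [i] \<sim> u' @ desc m j'"
      using desc_append_letter_factor[of j m i] u assms snoc.prems by auto
    have "v @ [i] \<sim> u @ desc m j @ [i]" using aff_eq_append_right[OF u(4)] by simp
    also have "\<dots> \<sim> (u @ u') @ desc m j'" using aff_eq_append_left[OF u'(4)] by simp
    finally show ?case using u u' by (intro exI[of _ "u @ u'"] exI[of _ j']) auto
  qed
  then show ?thesis using that by blast
qed

lemma aff_eq_Nil_if_phi_id: "m \<le> n \<Longrightarrow> set v \<subseteq> {1..<m} \<Longrightarrow> phi n v = id \<Longrightarrow> v \<sim> []"
proof (induction m arbitrary: v)
  case (Suc m)
  obtain u j where u: "set u \<subseteq> {1..<m}" "1 \<le> j" "j \<le> Suc m" "v \<sim> u @ desc (Suc m) j"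
    using desc_factorisation[of "Suc m" v] Suc.prems by auto
  have "j = phi n v j" using Suc.prems by simp
  also have "\<dots> = phi n u (Suc m)" using phi_aff_eq[OF u(4)] phi_desc_apply u by simp
  also have "\<dots> = Suc m" using phi_fix_above[OF u(1)] by simp
  finally have "v \<sim> u" using u(4) by (simp add: desc_def)
  moreover have "phi n u = id" using phi_aff_eq[OF \<open>v \<sim> u\<close>] Suc.prems(3) by metis
  ultimately show ?case using Suc.IH[of u] u Suc.prems aff_eq.trans by auto
qed (simp add: aff_eq.refl)

section \<open>The shift \<open>\<rho>\<close> and the rotation of \<open>{1..n}\<close>\<close>

lemma rho_pow_Nil [simp]: "rho_pow n k [] = []"
  and rho_pow_Cons [simp]: "rho_pow n k (i # w) = nat ((int i + k) mod int n) # rho_pow n k w"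
  and rho_pow_append [simp]: "rho_pow n k (u @ v) = rho_pow n k u @ rho_pow n k v"
  by (simp_all add: rho_pow_def)

lemma rho_pow_rho_pow [simp]: "rho_pow n a (rho_pow n b w) = rho_pow n (a + b) w"
proof -
  have "(int (nat ((int i + b) mod int n)) + a) mod int n = (int i + (a + b)) mod int n" for i
    using n2 by (simp add: mod_add_left_eq add.assoc add.commute[of a b])
  then show ?thesis by (simp add: rho_pow_def)
qed

lemma rho_pow_zero: "set w \<subseteq> {..<n} \<Longrightarrow> rho_pow n 0 w = w"
  by (induction w) auto

lemma rho_pow_inverse: "set w \<subseteq> {..<n} \<Longrightarrow> rho_pow n k (rho_pow n (- k) w) = w"
  by (simp add: rho_pow_zero)

lemma set_rho_pow: "set (rho_pow n k w) \<subseteq> {..<n}"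
  using n2 by (auto simp: rho_pow_def nat_less_iff)

lemma rho_pow_mult_n: "set w \<subseteq> {..<n} \<Longrightarrow> rho_pow n (int n * m) w = w"
  by (induction w) (auto simp: mod_pos_pos_trivial)

lemma rho_pow_minus_one: "set w \<subseteq> {1..<n} \<Longrightarrow> rho_pow n (- 1) w = map (\<lambda>i. i - 1) w"
  by (induction w) (auto simp: mod_pos_pos_trivial nat_diff_distrib)

lemma rho_pow_aff_eq: "u \<sim> v \<Longrightarrow> rho_pow n k u \<sim> rho_pow n k v"
proof (induction rule: aff_eq.induct)
  case (ctx l r a b)
  define f where "f i = nat ((int i + k) mod int n)" for i
  have f_less: "f i < n" for i using n2 by (simp add: f_def nat_less_iff)
  have f_diff: "(int (f i) - int (f j)) mod int n = (int i - int j) mod int n" for i j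
    using n2 by (simp add: f_def mod_diff_eq)
  then have f_adj: "adj_mod n (f i) (f j) = adj_mod n i j" for i j
    unfolding adj_mod_def by simp
  have "rho_pow n k l = map f l" "rho_pow n k r = map f r" by (simp_all add: rho_pow_def f_def)
  moreover from ctx have "aff_rel n (map f l) (map f r)"
  proof cases
    case (comm i j)
    then show ?thesis using aff_rel.comm[OF f_less f_less, of i j] by (simp add: f_adj f_diff)
  qed (auto intro!: aff_rel.intros f_less simp: f_adj)
  ultimately show ?case using aff_eq.ctx by simp
next
  case sym
  then show ?case by (blast intro: aff_eq.sym)
next
  case trans
  then show ?case by (blast intro: aff_eq.trans)
qed (rule aff_eq.refl)

definition rot :: "int \<Rightarrow> nat \<Rightarrow> nat" where
  "rot m j = (if 1 \<le> j \<and> j \<le> n then nat ((int j - 1 + m) mod int n) + 1 else j)"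

lemma rot_rot: "rot a (rot b j) = rot (a + b) j"
proof (cases "1 \<le> j \<and> j \<le> n")
  case True
  define r where "r = (int j - 1 + b) mod int n"
  have r: "0 \<le> r" "r < int n" using n2 by (simp_all add: r_def)
  have "rot b j = nat r + 1" using True by (simp add: rot_def r_def)
  moreover have "nat r + 1 \<le> n" using r by (simp add: nat_less_iff Suc_le_eq)
  moreover have "(r + a) mod int n = (int j - 1 + (a + b)) mod int n"
    by (simp add: r_def mod_add_left_eq mod_add_right_eq ac_simps)
  ultimately show ?thesis using True r by (simp add: rot_def)
next
  case False
  then have "rot c j = j" for c by (auto simp: rot_def)
  then show ?thesis by simp
qed

lemma rot_comp: "rot a \<circ> rot b = rot (a + b)"
  by (simp add: fun_eq_iff rot_rot)

lemma rot_mod: "rot (m mod int n) = rot m"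
  by (simp add: fun_eq_iff rot_def mod_add_right_eq)

lemma rot_zero: "rot 0 = id"
  by (auto simp: fun_eq_iff rot_def mod_pos_pos_trivial)

lemma rot_mult_n: "rot (int n * q) = id"
  by (metis rot_mod rot_zero mod_mult_self2_is_0 mult.commute)

lemma rot_inverse: "rot k \<circ> rot (- k) = id" "rot (- k) \<circ> rot k = id"
  by (simp_all add: rot_comp rot_zero)

lemma phi_gen_eq_transpose_rot:
  assumes "i < n"
  shows "phi_gen n i = transpose (rot (int i) n) (rot (int i + 1) n)"
proof -
  have "int n - 1 + int i = (int i - 1) + int n" by simp
  then have "(int n - 1 + int i) mod int n = (int i - 1) mod int n" by (metis mod_add_self2)
  also have "\<dots> = (if i = 0 then int n - 1 else int i - 1)"
    using assms n2 by (simp add: mod_eq_if_small)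
  finally have "rot (int i) n = (if i = 0 then n else i)" using n2 by (auto simp: rot_def)
  moreover have "rot (int i + 1) n = i + 1"
  proof -
    have "(int n - 1 + (int i + 1)) mod int n = int i"
      using assms mod_add_self2[of "int i" "int n"] by (simp add: mod_pos_pos_trivial ac_simps)
    then show ?thesis using n2 by (simp add: rot_def)
  qed
  ultimately show ?thesis by (simp add: phi_gen_eq_transpose)
qed

lemma phi_gen_rho_pow:
  assumes "i < n"
  shows "phi_gen n (nat ((int i + k) mod int n)) = rot k \<circ> phi_gen n i \<circ> rot (- k)"
proof -
  define i' where "i' = nat ((int i + k) mod int n)"
  have "i' < n" "int i' = (int i + k) mod int n" using n2 by (simp_all add: i'_def nat_less_iff)
  then have "phi_gen n i' = transpose (rot (int i + k) n) (rot (int i + k + 1) n)"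
    by (metis phi_gen_eq_transpose_rot rot_mod mod_add_left_eq)
  also have "\<dots> = transpose (rot k (rot (int i) n)) (rot k (rot (int i + 1) n))"
    by (simp add: rot_rot ac_simps)
  also have "\<dots> = rot k \<circ> phi_gen n i \<circ> rot (- k)"
    unfolding phi_gen_eq_transpose_rot[OF assms] by (rule transpose_conj[OF rot_inverse, symmetric])
  finally show ?thesis by (simp add: i'_def)
qed

lemma phi_rho_pow: "set w \<subseteq> {..<n} \<Longrightarrow> phi n (rho_pow n k w) = rot k \<circ> phi n w \<circ> rot (- k)"
proof (induction w)
  case (Cons i w)
  then have "i < n" "set w \<subseteq> {..<n}" by auto
  then have "phi n (rho_pow n k (i # w))
      = (rot k \<circ> phi_gen n i \<circ> rot (- k)) \<circ> (rot k \<circ> phi n w \<circ> rot (- k))"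
    by (simp only: rho_pow_Cons phi_Cons phi_gen_rho_pow Cons.IH)
  also have "\<dots> = rot k \<circ> phi n (i # w) \<circ> rot (- k)"
    by (simp add: fun_eq_iff rot_rot rot_zero)
  finally show ?case .
qed (simp add: rot_inverse)

lemma glide_phi:
  assumes "set g \<subseteq> {..<n}" "glide_offset n g k"
  shows "phi n g = rot (int k)"
proof
  fix j
  have "k < n" using assms(2) by (simp add: glide_offset_def)
  consider "j = 0 \<or> n < j" | "1 \<le> j" "j \<le> n - k" | "n - k < j" "j \<le> n" by linarith
  then show "phi n g j = rot (int k) j"
  proof cases
    case 1
    then show ?thesis using phi_fix_outside[OF assms(1)] by (auto simp: rot_def)
  next
    case 2
    then have "(int j - 1 + int k) mod int n = int j - 1 + int k"
      by (intro mod_pos_pos_trivial) auto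
    then have "rot (int k) j = j + k" using 2 by (simp add: rot_def) arith
    then show ?thesis using 2 assms(2) by (simp add: glide_offset_def)
  next
    case 3
    have "(int j - 1 + int k) mod int n = (int j - 1 + int k - int n) mod int n"
      by (rule minus_mod_self2[symmetric])
    also have "\<dots> = int j - 1 + int k - int n" using 3 \<open>k < n\<close> by (intro mod_pos_pos_trivial) auto
    finally show ?thesis using 3 assms(2) \<open>k < n\<close> by (simp add: rot_def glide_offset_def)
  qed
qed

section \<open>The extended affine symmetric group\<close>

text \<open>A pair \<open>(k, w)\<close> stands for \<open>\<tau>^k w\<close> in the extended affine symmetric group; since
  \<open>w \<tau>^k = \<tau>^k \<rho>^-k(w)\<close>, the product is computed by \<open>ext_mul\<close>, and \<open>ext_phi\<close> is the projection
  to the symmetric group, sending \<open>\<tau>\<close> to the cyclic rotation \<open>rot 1\<close>.\<close>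

definition ext_mul :: "int \<times> nat list \<Rightarrow> int \<times> nat list \<Rightarrow> int \<times> nat list" (infixl "\<cdot>" 70) where
  "p \<cdot> q = (fst p + fst q, rho_pow n (- fst q) (snd p) @ snd q)"

definition ext_eq :: "int \<times> nat list \<Rightarrow> int \<times> nat list \<Rightarrow> bool" (infix "\<simeq>" 50) where
  "p \<simeq> q \<longleftrightarrow> fst p = fst q \<and> snd p \<sim> snd q"

lemma ext_eq_refl [simp]: "p \<simeq> p"
  by (simp add: ext_eq_def aff_eq.refl)

lemma ext_eq_sym: "p \<simeq> q \<Longrightarrow> q \<simeq> p"
  by (simp add: ext_eq_def aff_eq.sym)

lemma ext_eq_trans [trans]: "p \<simeq> q \<Longrightarrow> q \<simeq> r \<Longrightarrow> p \<simeq> r"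
  unfolding ext_eq_def using aff_eq.trans by auto

lemma ext_eq_words: "u \<sim> v \<Longrightarrow> (k, u) \<simeq> (k, v)"
  by (simp add: ext_eq_def)

lemma ext_mul_cong: "p \<simeq> p' \<Longrightarrow> q \<simeq> q' \<Longrightarrow> p \<cdot> q \<simeq> p' \<cdot> q'"
  unfolding ext_eq_def ext_mul_def by (auto intro: aff_eq_append rho_pow_aff_eq)

lemma ext_mul_cong_left: "p \<simeq> p' \<Longrightarrow> p \<cdot> q \<simeq> p' \<cdot> q"
  and ext_mul_cong_right: "q \<simeq> q' \<Longrightarrow> p \<cdot> q \<simeq> p \<cdot> q'"
  by (simp_all add: ext_mul_cong)

lemma ext_mul_assoc: "p \<cdot> q \<cdot> r = p \<cdot> (q \<cdot> r)"
  by (simp add: ext_mul_def algebra_simps)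

lemma set_snd_ext_mul: "set (snd q) \<subseteq> {..<n} \<Longrightarrow> set (snd (p \<cdot> q)) \<subseteq> {..<n}"
  using set_rho_pow by (auto simp: ext_mul_def)

lemma ext_mul_unit_left [simp]: "(0, []) \<cdot> p = p"
  by (simp add: ext_mul_def)

lemma ext_mul_unit_right: "set (snd p) \<subseteq> {..<n} \<Longrightarrow> p \<cdot> (0, []) = p"
  by (simp add: ext_mul_def rho_pow_zero)

lemma ext_mul_words: "set u \<subseteq> {..<n} \<Longrightarrow> (0, u) \<cdot> (0, v) = (0, u @ v)"
  by (simp add: ext_mul_def rho_pow_zero)

lemma ext_mul_words_left [simp]: "set u \<subseteq> {..<n} \<Longrightarrow> (0, u) \<cdot> ((0, v) \<cdot> p) = (0, u @ v) \<cdot> p"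
  by (simp add: ext_mul_words flip: ext_mul_assoc)

lemma ext_mul_letter_letter: "i < n \<Longrightarrow> (0, [i]) \<cdot> (0, [i]) \<simeq> (0, [])"
  using ext_mul_words[of "[i]" "[i]"] by (simp add: ext_eq_def aff_eq_rel aff_rel.inv)

lemma ext_commute_mul:
  assumes "a \<cdot> c \<simeq> c \<cdot> a" "b \<cdot> c \<simeq> c \<cdot> b"
  shows "a \<cdot> b \<cdot> c \<simeq> c \<cdot> (a \<cdot> b)"
proof -
  have "a \<cdot> b \<cdot> c = a \<cdot> (b \<cdot> c)" by (simp add: ext_mul_assoc)
  also have "\<dots> \<simeq> a \<cdot> (c \<cdot> b)" by (rule ext_mul_cong_right[OF assms(2)])
  also have "\<dots> = a \<cdot> c \<cdot> b" by (simp add: ext_mul_assoc)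
  also have "\<dots> \<simeq> c \<cdot> a \<cdot> b" by (rule ext_mul_cong_left[OF assms(1)])
  also have "\<dots> = c \<cdot> (a \<cdot> b)" by (simp add: ext_mul_assoc)
  finally show ?thesis .
qed

definition ext_phi :: "int \<times> nat list \<Rightarrow> nat \<Rightarrow> nat" where
  "ext_phi p = rot (fst p) \<circ> phi n (snd p)"

lemma ext_phi_word [simp]: "ext_phi (0, w) = phi n w"
  by (simp add: ext_phi_def rot_zero)

lemma ext_phi_mul: "set (snd p) \<subseteq> {..<n} \<Longrightarrow> ext_phi (p \<cdot> q) = ext_phi p \<circ> ext_phi q"
  by (simp add: ext_phi_def ext_mul_def phi_rho_pow fun_eq_iff rot_rot)

lemma ext_phi_ext_eq: "p \<simeq> q \<Longrightarrow> ext_phi p = ext_phi q"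
  unfolding ext_eq_def ext_phi_def using phi_aff_eq by auto

section \<open>Translations\<close>

text \<open>\<open>\<tau> s\<^sub>n\<^sub>-\<^sub>1 \<cdots> s\<^sub>1\<close> is a translation, i.e.\ its projection to the symmetric group is trivial,
  and so are its conjugates \<open>transl j\<close>; these commute pairwise.\<close>

definition tau_desc :: "int \<times> nat list" where
  "tau_desc = (1, desc n 1)"

definition transl :: "nat \<Rightarrow> int \<times> nat list" where
  "transl j = (0, desc j 1) \<cdot> tau_desc \<cdot> (0, rev (desc j 1))"

lemma set_snd_tau_desc: "set (snd tau_desc) \<subseteq> {..<n}"
  by (auto simp: tau_desc_def)

lemma set_snd_transl: "j \<le> n \<Longrightarrow> set (snd (transl j)) \<subseteq> {..<n}"
  unfolding transl_def by (intro set_snd_ext_mul) auto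

lemma transl_one: "transl 1 = tau_desc"
  using ext_mul_unit_right[OF set_snd_tau_desc] by (simp add: transl_def desc_def)

lemma transl_conj_desc:
  assumes "1 \<le> i" "i \<le> j" "j \<le> n"
  shows "transl j = (0, desc j i) \<cdot> transl i \<cdot> (0, rev (desc j i))"
proof -
  have "desc j 1 = desc j i @ desc i 1"
    using assms upt_add_eq_append[of 1 i "j - i"] by (simp add: desc_def)
  then show ?thesis using assms by (simp add: transl_def ext_mul_assoc ext_mul_words)
qed

lemma transl_Suc: "1 \<le> i \<Longrightarrow> i < n \<Longrightarrow> transl (i + 1) = (0, [i]) \<cdot> transl i \<cdot> (0, [i])"
  using transl_conj_desc[of i "i + 1"] by (simp add: desc_def)

lemma letter_commute_tau_desc:
  assumes "2 \<le> i" "i < n"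
  shows "(0, [i]) \<cdot> tau_desc \<simeq> tau_desc \<cdot> (0, [i])"
proof -
  have "desc n 1 @ [i] \<sim> [i - 1] @ desc n 1" using assms by (intro desc_append_letter) auto
  moreover have "rho_pow n (- 1) [i] = [i - 1]" using assms by (simp add: rho_pow_minus_one)
  ultimately show ?thesis
    using set_snd_tau_desc by (simp add: tau_desc_def ext_mul_def rho_pow_zero ext_eq_def aff_eq.sym)
qed

lemma word_commute_tau_desc: "set u \<subseteq> {2..<n} \<Longrightarrow> (0, u) \<cdot> tau_desc \<simeq> tau_desc \<cdot> (0, u)"
proof (induction u)
  case Nil
  then show ?case by (simp add: ext_mul_unit_right set_snd_tau_desc)
next
  case (Cons i u)
  then have "(0, [i]) \<cdot> (0, u) \<cdot> tau_desc \<simeq> tau_desc \<cdot> ((0, [i]) \<cdot> (0, u))"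
    by (intro ext_commute_mul letter_commute_tau_desc) auto
  then show ?case using Cons.prems by (simp add: ext_mul_words)
qed

lemma letter_commute_transl:
  assumes "i < n" "2 \<le> i'" "i' < n" "j \<le> n" "[i] @ desc j 1 \<sim> desc j 1 @ [i']"
  shows "(0, [i]) \<cdot> transl j \<simeq> transl j \<cdot> (0, [i])"
proof -
  define Q where "Q = desc j 1"
  have Q: "set Q \<subseteq> {..<n}" "set (rev Q) \<subseteq> {..<n}" using assms by (auto simp: Q_def)
  have conj: "[i] @ Q \<sim> Q @ [i']" and rev_conj: "[i'] @ rev Q \<sim> rev Q @ [i]"
    using assms(5) aff_eq_rev[OF assms(5)] by (simp_all add: Q_def aff_eq.sym)
  have "(0, [i]) \<cdot> transl j = (0, [i] @ Q) \<cdot> tau_desc \<cdot> (0, rev Q)"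
    using assms by (simp add: transl_def Q_def ext_mul_assoc)
  also have "\<dots> \<simeq> (0, Q @ [i']) \<cdot> tau_desc \<cdot> (0, rev Q)"
    by (intro ext_mul_cong_left ext_eq_words conj)
  also have "\<dots> = (0, Q) \<cdot> ((0, [i']) \<cdot> tau_desc) \<cdot> (0, rev Q)"
    using Q by (simp add: ext_mul_assoc ext_mul_words)
  also have "\<dots> \<simeq> (0, Q) \<cdot> (tau_desc \<cdot> (0, [i'])) \<cdot> (0, rev Q)"
    using assms by (intro ext_mul_cong_left ext_mul_cong_right letter_commute_tau_desc)
  also have "\<dots> = (0, Q) \<cdot> tau_desc \<cdot> (0, [i'] @ rev Q)"
    using assms by (simp add: ext_mul_assoc ext_mul_words)
  also have "\<dots> \<simeq> (0, Q) \<cdot> tau_desc \<cdot> (0, rev Q @ [i])"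
    by (intro ext_mul_cong_right ext_eq_words rev_conj)
  also have "\<dots> = transl j \<cdot> (0, [i])"
    using Q by (simp add: transl_def Q_def ext_mul_assoc ext_mul_words)
  finally show ?thesis .
qed

lemma letter_mul_transl:
  assumes "1 \<le> i" "i < n" "1 \<le> j" "j \<le> n"
  shows "(0, [i]) \<cdot> transl j \<simeq> transl (transpose i (i + 1) j) \<cdot> (0, [i])"
proof -
  consider "j = i" | "j = i + 1" | "j < i" | "i + 1 < j" by linarith
  then show ?thesis
  proof cases
    case 1
    have "transl (i + 1) \<cdot> (0, [i]) = (0, [i]) \<cdot> transl i \<cdot> ((0, [i]) \<cdot> (0, [i]))"
      using transl_Suc[OF assms(1,2)] by (simp add: ext_mul_assoc)
    also have "\<dots> \<simeq> (0, [i]) \<cdot> transl i \<cdot> (0, [])"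
      by (intro ext_mul_cong_right ext_mul_letter_letter assms)
    also have "\<dots> = (0, [i]) \<cdot> transl i"
      using assms by (intro ext_mul_unit_right set_snd_ext_mul set_snd_transl) auto
    finally show ?thesis using 1 by (simp add: ext_eq_sym)
  next
    case 2
    have "(0, [i]) \<cdot> transl j = (0, [i]) \<cdot> (0, [i]) \<cdot> (transl i \<cdot> (0, [i]))"
      using transl_Suc[OF assms(1,2)] 2 by (simp add: ext_mul_assoc)
    also have "\<dots> \<simeq> (0, []) \<cdot> (transl i \<cdot> (0, [i]))"
      by (intro ext_mul_cong_left ext_mul_letter_letter assms)
    finally show ?thesis using 2 by simp
  next
    case 3
    have "[i] @ desc j 1 \<sim> desc j 1 @ [i]"
      using assms 3 by (intro aff_eq_commute_far_word) auto
    then show ?thesis using assms 3 letter_commute_transl[of i i j] by simp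
  next
    case 4
    have "desc j 1 @ [i + 1] \<sim> [i + 1 - 1] @ desc j 1"
      using assms 4 by (intro desc_append_letter) auto
    then have "[i] @ desc j 1 \<sim> desc j 1 @ [i + 1]" by (simp add: aff_eq.sym)
    then show ?thesis using assms 4 letter_commute_transl[of i "i + 1" j] by simp
  qed
qed

lemma word_mul_transl:
  assumes "set v \<subseteq> {1..<n}" "1 \<le> j" "j \<le> n"
  shows "(0, v) \<cdot> transl j \<simeq> transl (phi n v j) \<cdot> (0, v)"
  using assms(1)
proof (induction v)
  case Nil
  then show ?case using set_snd_transl assms by (simp add: ext_mul_unit_right)
next
  case (Cons i v)
  then have i: "1 \<le> i" "i < n" and v: "set v \<subseteq> {1..<n}" by auto
  then have "set v \<subseteq> {..<n}" by auto
  then have r: "1 \<le> phi n v j" "phi n v j \<le> n" using phi_in_range assms by auto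
  have "(0, i # v) \<cdot> transl j = (0, [i]) \<cdot> ((0, v) \<cdot> transl j)"
    using i by (simp add: ext_mul_assoc)
  also have "\<dots> \<simeq> (0, [i]) \<cdot> transl (phi n v j) \<cdot> (0, v)"
    unfolding ext_mul_assoc by (intro ext_mul_cong_right Cons.IH v)
  also have "\<dots> \<simeq> transl (phi n (i # v) j) \<cdot> (0, [i]) \<cdot> (0, v)"
    using letter_mul_transl[OF i r] i by (intro ext_mul_cong_left) (simp add: phi_gen_def)
  also have "\<dots> = transl (phi n (i # v) j) \<cdot> (0, i # v)"
    using i by (simp add: ext_mul_assoc ext_mul_words)
  finally show ?case .
qed

lemma desc_shift_word: "set L \<subseteq> {2..<n} \<Longrightarrow> desc n 1 @ L \<sim> map (\<lambda>i. i - 1) L @ desc n 1"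
proof (induction L)
  case (Cons l L)
  then have "desc n 1 @ [l] \<sim> [l - 1] @ desc n 1" by (intro desc_append_letter) auto
  then have "desc n 1 @ l # L \<sim> [l - 1] @ desc n 1 @ L"
    using aff_eq_append_right[of n "desc n 1 @ [l]" "[l - 1] @ desc n 1" L] by simp
  also have "\<dots> \<sim> [l - 1] @ map (\<lambda>i. i - 1) L @ desc n 1"
    using Cons by (intro aff_eq_append_left) auto
  finally show ?case by simp
qed (simp add: aff_eq.refl)

lemma desc_one_square_word:
  "desc n 1 @ [0, 0] @ desc n 1 \<sim> desc (n - 1) 1 @ [0, 0] @ desc n 2 @ [1, 1]"
proof -
  define C D E where "C = desc n 1" and "D = desc (n - 1) 1" and "E = desc n 2"
  have C_E: "C = E @ [1]"
    using n2 by (simp add: C_def E_def desc_def upt_conv_Cons numeral_2_eq_2)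
  have "C @ [0, 0] @ C \<sim> (C @ E) @ [1]"
    using aff_eq_cancel_pair[of 0 C C] n2 by (simp add: C_E)
  also have "\<dots> \<sim> (D @ C) @ [1]"
    using desc_shift_word[of E] map_pred_desc[of "n - 1" 1] n2
    by (intro aff_eq_append_right) (auto simp: C_def D_def E_def numeral_2_eq_2)
  also have "\<dots> = D @ E @ [1, 1]" by (simp add: C_E)
  also have "\<dots> \<sim> D @ [0, 0] @ E @ [1, 1]"
    using aff_eq.sym[OF aff_eq_cancel_pair[of 0 D "E @ [1, 1]"]] n2 by simp
  finally show ?thesis by (simp add: C_def D_def E_def)
qed

lemma tau_desc_commute_transl_two: "tau_desc \<cdot> transl 2 \<simeq> transl 2 \<cdot> tau_desc"
proof -
  define C D E where "C = desc n 1" and "D = desc (n - 1) 1" and "E = desc n 2"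
  have C_E: "C = E @ [1]"
    using n2 by (simp add: C_def E_def desc_def upt_conv_Cons numeral_2_eq_2)
  have C_D: "C = [n - 1] @ D"
    using n2 upt_Suc_append[of 1 "n - 1"] by (simp add: C_def D_def desc_def)
  have "rho_pow n (- 1) C = map (\<lambda>i. i - 1) E @ [0]"
    by (simp add: C_E rho_pow_minus_one E_def)
  then have rho_C: "rho_pow n (- 1) C = D @ [0]"
    using map_pred_desc[of "n - 1" 1] n2 by (simp add: E_def D_def numeral_2_eq_2)
  have rho_0: "rho_pow n (- 1) [0] = [n - 1]"
    using n2 by (simp add: zmod_zminus1_eq_if of_nat_diff)
  have "transl 2 = (0, [1]) \<cdot> tau_desc \<cdot> (0, [1])"
    using transl_Suc[of 1, unfolded transl_one one_add_one] n2 by simp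
  also have "\<dots> = (1, [0] @ C @ [1])"
    using n2 rho_pow_minus_one[of "[1]"] set_snd_tau_desc
    by (simp add: tau_desc_def C_def ext_mul_def rho_pow_zero)
  finally have transl_two: "transl 2 = (1, [0] @ C @ [1])" .
  have tau_C: "tau_desc = (1, C)" by (simp add: tau_desc_def C_def)
  have "tau_desc \<cdot> transl 2 = (2, D @ [0, 0] @ E @ [1, 1])"
    unfolding transl_two tau_C ext_mul_def fst_conv snd_conv rho_C by (simp add: C_E)
  moreover have "transl 2 \<cdot> tau_desc = (2, C @ [0, 0] @ C)"
    unfolding transl_two tau_C ext_mul_def fst_conv snd_conv rho_pow_append rho_C rho_0
    by (simp add: C_D)
  ultimately show ?thesis
    using desc_one_square_word by (simp add: ext_eq_def C_def D_def E_def aff_eq.sym)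
qed

lemma tau_desc_commute_transl:
  assumes "2 \<le> j" "j \<le> n"
  shows "tau_desc \<cdot> transl j \<simeq> transl j \<cdot> tau_desc"
proof -
  have "transl j = (0, desc j 2) \<cdot> transl 2 \<cdot> (0, rev (desc j 2))"
    using assms by (intro transl_conj_desc) auto
  moreover have "(0, desc j 2) \<cdot> transl 2 \<cdot> (0, rev (desc j 2)) \<cdot> tau_desc
      \<simeq> tau_desc \<cdot> ((0, desc j 2) \<cdot> transl 2 \<cdot> (0, rev (desc j 2)))"
    using assms
    by (intro ext_commute_mul word_commute_tau_desc ext_eq_sym[OF tau_desc_commute_transl_two]) auto
  ultimately show ?thesis by (simp add: ext_eq_sym)
qed

lemma transl_commute_less:
  assumes "1 \<le> i" "i < j" "j \<le> n"
  shows "transl i \<cdot> transl j \<simeq> transl j \<cdot> transl i"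
proof -
  define Q where "Q = desc i 1"
  have Q: "set Q \<subseteq> {1..<n}" "set (rev Q) \<subseteq> {1..<n}" using assms by (auto simp: Q_def)
  have "phi n Q j = j" "phi n (rev Q) j = j"
    using assms by (auto simp: Q_def intro: phi_fix_above[of _ i])
  then have "(0, Q) \<cdot> transl j \<simeq> transl j \<cdot> (0, Q)" "(0, rev Q) \<cdot> transl j \<simeq> transl j \<cdot> (0, rev Q)"
    using word_mul_transl[OF Q(1), of j] word_mul_transl[OF Q(2), of j] assms by simp_all
  moreover have "tau_desc \<cdot> transl j \<simeq> transl j \<cdot> tau_desc"
    using assms by (intro tau_desc_commute_transl) auto
  ultimately show ?thesis unfolding transl_def[of i] Q_def[symmetric]
    by (intro ext_commute_mul)
qed

lemma transl_commute:
  assumes "1 \<le> i" "i \<le> n" "1 \<le> j" "j \<le> n"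
  shows "transl i \<cdot> transl j \<simeq> transl j \<cdot> transl i"
proof (cases i j rule: linorder_cases)
  case greater
  then show ?thesis using assms transl_commute_less[of j i] by (simp add: ext_eq_sym)
qed (use assms transl_commute_less in simp_all)

definition transl_prod :: "nat list \<Rightarrow> int \<times> nat list" where
  "transl_prod js = foldr (\<lambda>j p. transl j \<cdot> p) js (0, [])"

lemma transl_prod_Nil [simp]: "transl_prod [] = (0, [])"
  and transl_prod_Cons [simp]: "transl_prod (j # js) = transl j \<cdot> transl_prod js"
  by (simp_all add: transl_prod_def)

lemma set_snd_transl_prod: "set (snd (transl_prod js)) \<subseteq> {..<n}"
  by (induction js) (simp_all add: set_snd_ext_mul)

lemma transl_prod_snoc: "j \<le> n \<Longrightarrow> transl_prod (js @ [j]) = transl_prod js \<cdot> transl j"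
  by (induction js) (auto simp: ext_mul_assoc ext_mul_unit_right set_snd_transl)

lemma transl_commute_transl_prod:
  assumes "1 \<le> j" "j \<le> n" "set js \<subseteq> {1..n}"
  shows "transl_prod js \<cdot> transl j \<simeq> transl j \<cdot> transl_prod js"
  using assms(3)
proof (induction js)
  case Nil
  then show ?case using assms set_snd_transl by (simp add: ext_mul_unit_right)
next
  case (Cons i js)
  then show ?case unfolding transl_prod_Cons
    using assms by (intro ext_commute_mul[OF transl_commute Cons.IH]) auto
qed

lemma transl_prod_commute:
  assumes "set is \<subseteq> {1..n}" "set js \<subseteq> {1..n}"
  shows "transl_prod is \<cdot> transl_prod js \<simeq> transl_prod js \<cdot> transl_prod is"
  using assms(1)
proof (induction "is")
  case Nil
  then show ?case by (simp add: ext_mul_unit_right set_snd_transl_prod)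
next
  case (Cons i "is")
  then show ?case unfolding transl_prod_Cons using assms(2)
    by (intro ext_commute_mul[OF ext_eq_sym[OF transl_commute_transl_prod] Cons.IH]) auto
qed

lemma ext_phi_tau_desc: "ext_phi tau_desc = id"
proof
  fix x
  have "rot 1 y = (if 1 \<le> y \<and> y < n then y + 1 else if y = n then 1 else y)" for y
    using n2 by (auto simp: rot_def mod_pos_pos_trivial nat_add_distrib)
  then show "ext_phi tau_desc x = id x"
    using n2 phi_desc_one[of n n x] by (auto simp: ext_phi_def tau_desc_def)
qed

lemma ext_phi_transl:
  assumes "j \<le> n"
  shows "ext_phi (transl j) = id"
proof -
  have "ext_phi (transl j) = phi n (desc j 1 @ rev (desc j 1))"
    using assms set_snd_tau_desc
    by (simp add: transl_def ext_phi_mul set_snd_ext_mul ext_phi_tau_desc)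
  also have "\<dots> = id"
    using phi_aff_eq[OF aff_eq_append_rev_Nil[of "desc j 1" n]] assms by simp
  finally show ?thesis .
qed

lemma ext_phi_transl_prod: "set js \<subseteq> {1..n} \<Longrightarrow> ext_phi (transl_prod js) = id"
  by (induction js) (simp_all add: ext_phi_mul ext_phi_transl set_snd_transl)

section \<open>Normal forms\<close>

definition center :: "nat \<Rightarrow> int \<times> nat list" where
  "center q = (- (int n * int q), [])"

lemma center_commute: "set (snd p) \<subseteq> {..<n} \<Longrightarrow> p \<cdot> center q = center q \<cdot> p"
  using rho_pow_mult_n[of "snd p" "int q"] by (simp add: ext_mul_def center_def)

lemma snd_center [simp]: "snd (center q) = []"
  by (simp add: center_def)

lemma center_mul: "center a \<cdot> center b = center (a + b)"
  by (simp add: ext_mul_def center_def algebra_simps)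

lemma ext_phi_center: "ext_phi (center q) = id"
  using rot_mult_n[of "- int q"] by (simp add: ext_phi_def center_def)

definition normal_form :: "nat \<Rightarrow> nat list \<Rightarrow> nat list \<Rightarrow> int \<times> nat list" where
  "normal_form q js v = center q \<cdot> transl_prod js \<cdot> (0, v)"

definition has_normal_form :: "int \<times> nat list \<Rightarrow> bool" where
  "has_normal_form e \<longleftrightarrow>
     (\<exists>q js v. set js \<subseteq> {1..n} \<and> set v \<subseteq> {1..<n} \<and> e \<simeq> normal_form q js v)"

lemma has_normal_formI:
  "set js \<subseteq> {1..n} \<Longrightarrow> set v \<subseteq> {1..<n} \<Longrightarrow> e \<simeq> normal_form q js v \<Longrightarrow> has_normal_form e"
  unfolding has_normal_form_def by blast

lemma has_normal_form_mul:
  assumes "has_normal_form e"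
    and "\<And>q js v. set js \<subseteq> {1..n} \<Longrightarrow> set v \<subseteq> {1..<n} \<Longrightarrow> has_normal_form (normal_form q js v \<cdot> p)"
  shows "has_normal_form (e \<cdot> p)"
  using assms ext_mul_cong_left ext_eq_trans unfolding has_normal_form_def by meson

lemma set_snd_normal_form: "set v \<subseteq> {..<n} \<Longrightarrow> set (snd (normal_form q js v)) \<subseteq> {..<n}"
  unfolding normal_form_def by (intro set_snd_ext_mul) simp

lemma has_normal_form_mul_letter:
  assumes "1 \<le> i" "i < n" "has_normal_form e"
  shows "has_normal_form (e \<cdot> (0, [i]))"
  using assms(3)
proof (rule has_normal_form_mul)
  fix q js v assume js: "set js \<subseteq> {1..n}" and v: "set v \<subseteq> {1..<n}"
  then have "set v \<subseteq> {..<n}" by auto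
  then have "normal_form q js v \<cdot> (0, [i]) = normal_form q js (v @ [i])"
    unfolding normal_form_def by (simp add: ext_mul_assoc ext_mul_words)
  then show "has_normal_form (normal_form q js v \<cdot> (0, [i]))"
    using js v assms by (intro has_normal_formI[of js "v @ [i]" _ q]) auto
qed

lemma has_normal_form_mul_tau:
  assumes "has_normal_form e"
  shows "has_normal_form (e \<cdot> (1, []))"
  using assms
proof (rule has_normal_form_mul)
  fix q js v assume js: "set js \<subseteq> {1..n}" and v: "set v \<subseteq> {1..<n}"
  define C where "C = desc n 1"
  have v': "set v \<subseteq> {..<n}" using v by auto
  then have j: "1 \<le> phi n v 1" "phi n v 1 \<le> n" using phi_in_range n2 by auto
  have tau: "(1, []) \<simeq> tau_desc \<cdot> (0, rev C)"
    using aff_eq_append_rev_Nil[of C n] set_snd_tau_desc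
    by (simp add: C_def tau_desc_def ext_mul_def rho_pow_zero ext_eq_def aff_eq.sym)
  have "normal_form q js v \<cdot> (1, []) \<simeq> center q \<cdot> transl_prod js \<cdot> ((0, v) \<cdot> transl 1) \<cdot> (0, rev C)"
    unfolding normal_form_def transl_one ext_mul_assoc by (intro ext_mul_cong_right tau)
  also have "\<dots> \<simeq> center q \<cdot> transl_prod js \<cdot> (transl (phi n v 1) \<cdot> (0, v)) \<cdot> (0, rev C)"
    using v n2 by (intro ext_mul_cong_left ext_mul_cong_right word_mul_transl) auto
  also have "\<dots> = normal_form q (js @ [phi n v 1]) (v @ rev C)"
    using j v' by (simp add: normal_form_def ext_mul_assoc transl_prod_snoc ext_mul_words)
  finally show "has_normal_form (normal_form q js v \<cdot> (1, []))"
    using js j v by (intro has_normal_formI) (auto simp: C_def)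
qed

lemma has_normal_form_mul_center:
  assumes "has_normal_form e"
  shows "has_normal_form (e \<cdot> center 1)"
  using assms
proof (rule has_normal_form_mul)
  fix q js v assume js: "set js \<subseteq> {1..n}" and v: "set v \<subseteq> {1..<n}"
  have "normal_form q js v \<cdot> center 1 = center 1 \<cdot> normal_form q js v"
    using v by (intro center_commute set_snd_normal_form) auto
  also have "\<dots> = normal_form (1 + q) js v"
    by (simp add: normal_form_def center_mul flip: ext_mul_assoc)
  finally show "has_normal_form (normal_form q js v \<cdot> center 1)"
    using js v by (intro has_normal_formI[of js v _ "1 + q"]) auto
qed

lemma has_normal_form_mul_tau_pow: "has_normal_form e \<Longrightarrow> has_normal_form (e \<cdot> (int m, []))"
proof (induction m)
  case 0
  then show ?case
  proof (rule has_normal_form_mul)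
    fix q js v assume js: "set js \<subseteq> {1..n}" and v: "set v \<subseteq> {1..<n}"
    then have "set v \<subseteq> {..<n}" by auto
    then have "normal_form q js v \<cdot> (int 0, []) = normal_form q js v"
      by (simp add: ext_mul_unit_right set_snd_normal_form)
    then show "has_normal_form (normal_form q js v \<cdot> (int 0, []))"
      using js v by (intro has_normal_formI[of js v _ q]) auto
  qed
next
  case (Suc m)
  have "e \<cdot> (int (Suc m), []) = e \<cdot> (int m, []) \<cdot> (1, [])"
    by (simp add: ext_mul_assoc ext_mul_def)
  then show ?case using has_normal_form_mul_tau[OF Suc.IH[OF Suc.prems]] by simp
qed

lemma has_normal_form_mul_tau_inverse: "has_normal_form e \<Longrightarrow> has_normal_form (e \<cdot> (- 1, []))"
proof -
  assume "has_normal_form e"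
  moreover have "e \<cdot> (- 1, []) = e \<cdot> (int (n - 1), []) \<cdot> center 1"
    using n2 by (simp add: ext_mul_assoc ext_mul_def center_def of_nat_diff)
  ultimately show ?thesis using has_normal_form_mul_center has_normal_form_mul_tau_pow by simp
qed

lemma has_normal_form_mul_generator:
  assumes "i < n" "has_normal_form e"
  shows "has_normal_form (e \<cdot> (0, [i]))"
proof (cases "i = 0")
  case True
  have "rho_pow n 1 [n - 1] = [0]" using n2 by (simp add: of_nat_diff)
  then have "e \<cdot> (0, [0]) = e \<cdot> (1, []) \<cdot> (0, [n - 1]) \<cdot> (- 1, [])"
    by (simp add: ext_mul_assoc ext_mul_def)
  then show ?thesis using True n2 assms(2)
    by (simp add: has_normal_form_mul_tau_inverse has_normal_form_mul_letter has_normal_form_mul_tau)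
qed (use assms has_normal_form_mul_letter in simp)

lemma has_normal_form_nonpos: "set u \<subseteq> {..<n} \<Longrightarrow> has_normal_form (- int a, u)"
proof (induction u rule: rev_induct)
  case Nil
  show ?case
  proof (induction a)
    case 0
    show ?case by (intro has_normal_formI[of "[]" "[]" _ 0]) (auto simp: normal_form_def center_def)
  next
    case (Suc a)
    have "(- int (Suc a), []) = (- int a, []) \<cdot> (- 1, [])" by (simp add: ext_mul_def)
    then show ?case using has_normal_form_mul_tau_inverse[OF Suc.IH] by simp
  qed
next
  case (snoc i u)
  then have "(- int a, u @ [i]) = (- int a, u) \<cdot> (0, [i])" by (simp add: ext_mul_def rho_pow_zero)
  then show ?case using has_normal_form_mul_generator snoc by simp
qed

lemma rotated_word_translation:
  assumes "set u \<subseteq> {..<n}" "phi n u = rot (int a)"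
  obtains q js where "set js \<subseteq> {1..n}" "(- int a, u) \<simeq> center q \<cdot> transl_prod js"
proof -
  obtain q js v where js: "set js \<subseteq> {1..n}" and v: "set v \<subseteq> {1..<n}"
    and e: "(- int a, u) \<simeq> normal_form q js v"
    using has_normal_form_nonpos[OF assms(1), of a] unfolding has_normal_form_def by blast
  have "phi n v = ext_phi (normal_form q js v)"
    using js by (simp add: normal_form_def ext_phi_mul ext_phi_center ext_phi_transl_prod
        set_snd_ext_mul set_snd_transl_prod)
  also have "\<dots> = rot (- int a) \<circ> rot (int a)"
    using ext_phi_ext_eq[OF e] assms(2) by (simp add: ext_phi_def)
  finally have "v \<sim> []" using aff_eq_Nil_if_phi_id[of n v] v by (simp add: rot_inverse)
  then have "normal_form q js v \<simeq> center q \<cdot> transl_prod js \<cdot> (0, [])"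
    unfolding normal_form_def by (intro ext_mul_cong_right ext_eq_words)
  also have "\<dots> = center q \<cdot> transl_prod js"
    by (intro ext_mul_unit_right set_snd_ext_mul set_snd_transl_prod)
  finally show ?thesis using that js e ext_eq_trans by blast
qed

lemma translations_commute:
  assumes "set js \<subseteq> {1..n}" "set js' \<subseteq> {1..n}"
  shows "center q \<cdot> transl_prod js \<cdot> (center q' \<cdot> transl_prod js')
    \<simeq> center q' \<cdot> transl_prod js' \<cdot> (center q \<cdot> transl_prod js)"
proof -
  have regroup: "center a \<cdot> transl_prod is \<cdot> (center b \<cdot> transl_prod is')
      = center (a + b) \<cdot> (transl_prod is \<cdot> transl_prod is')" for a b "is" is'
  proof -
    have "center a \<cdot> transl_prod is \<cdot> (center b \<cdot> transl_prod is')
        = center a \<cdot> (transl_prod is \<cdot> center b) \<cdot> transl_prod is'"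
      by (simp only: ext_mul_assoc)
    also have "\<dots> = center a \<cdot> center b \<cdot> (transl_prod is \<cdot> transl_prod is')"
      by (simp only: center_commute[OF set_snd_transl_prod] ext_mul_assoc)
    finally show ?thesis by (simp only: center_mul)
  qed
  show ?thesis unfolding regroup add.commute[of q]
    by (intro ext_mul_cong_right transl_prod_commute assms)
qed

lemma rotated_words_commute:
  assumes "set u \<subseteq> {..<n}" "phi n u = rot (int a)"
    and "set v \<subseteq> {..<n}" "phi n v = rot (int b)"
  shows "rho_pow n (int b) u @ v \<sim> rho_pow n (int a) v @ u"
proof -
  obtain q js where js: "set js \<subseteq> {1..n}" and u: "(- int a, u) \<simeq> center q \<cdot> transl_prod js"
    using rotated_word_translation[OF assms(1,2)] .
  obtain q' js' where js': "set js' \<subseteq> {1..n}" and v: "(- int b, v) \<simeq> center q' \<cdot> transl_prod js'"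
    using rotated_word_translation[OF assms(3,4)] .
  have "(- int a, u) \<cdot> (- int b, v) \<simeq> center q \<cdot> transl_prod js \<cdot> (center q' \<cdot> transl_prod js')"
    by (rule ext_mul_cong[OF u v])
  also have "\<dots> \<simeq> center q' \<cdot> transl_prod js' \<cdot> (center q \<cdot> transl_prod js)"
    by (rule translations_commute[OF js js'])
  also have "\<dots> \<simeq> (- int b, v) \<cdot> (- int a, u)"
    by (rule ext_mul_cong[OF ext_eq_sym[OF v] ext_eq_sym[OF u]])
  finally show ?thesis by (simp add: ext_eq_def ext_mul_def)
qed

end

theorem lemma2p1:
  fixes n k1 k2 :: nat and g1 g2 :: "nat list"
  assumes "n \<ge> 2"
    and "aff_word n g1" and "aff_word n g2"
    and "glide_offset n g1 k1" and "glide_offset n g2 k2"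
  shows "aff_eq n (g2 @ g1) (rho_pow n (int k2) g1 @ rho_pow n (- int k1) g2)"
proof -
  have g1: "set g1 \<subseteq> {..<n}" and g2: "set g2 \<subseteq> {..<n}"
    using assms(2,3) by (simp_all add: aff_word_def)
  define h where "h = rho_pow n (- int k1) g2"
  have h: "set h \<subseteq> {..<n}" unfolding h_def by (rule set_rho_pow[OF assms(1)])
  have "phi n h = rot n (int k2)"
    using phi_rho_pow[OF assms(1) g2] glide_phi[OF assms(1) g2 assms(5)]
    by (simp add: h_def rot_comp[OF assms(1)])
  then have "aff_eq n (rho_pow n (int k2) g1 @ h) (rho_pow n (int k1) h @ g1)"
    using rotated_words_commute[OF assms(1) g1 glide_phi[OF assms(1) g1 assms(4)] h] by blast
  moreover have "rho_pow n (int k1) h = g2" unfolding h_def by (rule rho_pow_inverse[OF assms(1) g2])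
  ultimately show ?thesis by (simp add: h_def aff_eq.sym)
qed

end
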